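(* Suppose that $$\|\theta^*\|\,\mathbb{E}_{x\sim Q}\Big[\sup_{\delta\in\mathbb{R}^D:\|\delta\|\le\|\theta^*\|}\|\nabla_\theta r(x;\theta^*+\delta)\|\Big]\le c,\qquad 0<c<1.$$ Then $\mathbb{E}_{x\sim Q}\big[\inf_{\delta\in\mathbb{R}^D:\|\delta\|\le\|\theta^*\|}r(x;\theta^*+\delta)\big]\ge 1-c$.
   Context: $Q$ is a distribution on $\mathbb{R}^m$ with density $q$; $f:\mathbb{R}^m\to\mathbb{R}^D$ is a feature map; the density ratio model is $r(x;\theta)=\exp(\theta^\top f(x))/N(\theta)$ with $N(\theta)=\mathbb{E}_{x\sim Q}[\exp(\theta^\top f(x))]$; $\theta^*\in\mathbb{R}^D$ is fixed; $\|\cdot\|$ is the Euclidean norm and $\nabla_\theta r$ the gradient in $\theta$. *)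

theory Defs
  imports "HOL-Analysis.Analysis" "HOL-Probability.Probability"
begin

definition normconst :: "'a measure \<Rightarrow> ('a \<Rightarrow> 'b::euclidean_space) \<Rightarrow> 'b \<Rightarrow> real" where
  "normconst Q f \<theta> = (\<integral>x. exp (\<theta> \<bullet> f x) \<partial>Q)"

definition ratio :: "'a measure \<Rightarrow> ('a \<Rightarrow> 'b::euclidean_space) \<Rightarrow> 'a \<Rightarrow> 'b \<Rightarrow> real" where
  "ratio Q f x \<theta> = exp (\<theta> \<bullet> f x) / normconst Q f \<theta>"

definition ratio_grad :: "'a measure \<Rightarrow> ('a \<Rightarrow> 'b::euclidean_space) \<Rightarrow> 'a \<Rightarrow> 'b \<Rightarrow> 'b" where
  "ratio_grad Q f x \<theta> = (THE D. GDERIV (\<lambda>t. ratio Q f x t) \<theta> :> D)"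

end

theory Submission
  imports Defs
begin

text \<open>
  For each sample \<open>x\<close> and each \<open>\<delta>\<close> in the ball, the mean value theorem along the segment from
  \<open>\<theta>\<^sup>*\<close> to \<open>\<theta>\<^sup>* + \<delta>\<close> gives \<open>r(x;\<theta>\<^sup>*) \<le> r(x;\<theta>\<^sup>* + \<delta>) + \<parallel>\<theta>\<^sup>*\<parallel> G(x)\<close>, where \<open>G(x)\<close> is the
  supremum of the gradient norm over the ball. Hence \<open>r(x;\<theta>\<^sup>*) - \<parallel>\<theta>\<^sup>*\<parallel> G(x)\<close> is below the
  infimum of \<open>r(x; \<cdot>)\<close> over the ball. Since \<open>r(\<cdot>;\<theta>\<^sup>*)\<close> integrates to \<open>1\<close> under \<open>Q\<close>,
  integrating gives \<open>1 \<le> \<integral> inf r + \<parallel>\<theta>\<^sup>*\<parallel> \<integral> G \<le> \<integral> inf r + c\<close>. Working in \<open>ennreal\<close>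
  makes an unbounded gradient harmless: then \<open>G(x) = \<infinity>\<close>.
\<close>

lemma gderiv_The:
  fixes F :: "'b::euclidean_space \<Rightarrow> real"
  assumes "F differentiable (at t)"
  shows "GDERIV F t :> (THE D. GDERIV F t :> D)"
proof -
  obtain g where g: "(F has_derivative g) (at t)"
    using assms differentiable_def by blast
  then have "linear g" by (rule has_derivative_linear)
  define D where "D = adjoint g 1"
  have "g = (\<lambda>h. h \<bullet> D)"
    using adjoint_works[OF \<open>linear g\<close>, of _ 1] by (simp add: D_def fun_eq_iff)
  then have D: "GDERIV F t :> D"
    using g unfolding gderiv_def by simp
  moreover have "E = D" if "GDERIV F t :> E" for E
  proof -
    have "(\<lambda>h. h \<bullet> E) = (\<lambda>h. h \<bullet> D)"
      using that D unfolding gderiv_def by (rule has_derivative_unique)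
    then have "(E - D) \<bullet> (E - D) = 0"
      by (metis inner_diff_right right_minus_eq)
    then show ?thesis by simp
  qed
  ultimately show ?thesis by (metis theI)
qed

lemma gderiv_mean_value:
  fixes F :: "'b::real_inner \<Rightarrow> real"
  assumes "\<And>t. GDERIV F t :> G t"
  shows "\<exists>\<xi>\<in>{0..1}. F (\<theta> + \<delta>) - F \<theta> = \<delta> \<bullet> G (\<theta> + \<xi> *\<^sub>R \<delta>)"
proof -
  have "((\<lambda>s. F (\<theta> + s *\<^sub>R \<delta>)) has_derivative (\<lambda>u. (u *\<^sub>R \<delta>) \<bullet> G (\<theta> + s *\<^sub>R \<delta>)))
          (at s within {0..1})" for s
  proof -
    have "((\<lambda>s. \<theta> + s *\<^sub>R \<delta>) has_derivative (\<lambda>u. u *\<^sub>R \<delta>)) (at s within {0..1})"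
      by (auto intro!: derivative_eq_intros)
    from has_derivative_compose[OF this assms[of "\<theta> + s *\<^sub>R \<delta>", unfolded gderiv_def]]
    show ?thesis by (simp add: o_def)
  qed
  from mvt_very_simple[of 0 1, OF _ this] show ?thesis by simp
qed

lemma ennreal_le_by_sup_gradient:
  fixes F :: "'b::real_inner \<Rightarrow> real"
  assumes "\<And>t. GDERIV F t :> G t" and "norm \<delta> \<le> R"
  shows "ennreal (F \<theta>) \<le>
    ennreal (F (\<theta> + \<delta>)) + ennreal R * (SUP e\<in>cball 0 R. ennreal (norm (G (\<theta> + e))))"
proof -
  obtain \<xi> where \<xi>: "\<xi> \<in> {0..1}" and mvt: "F (\<theta> + \<delta>) - F \<theta> = \<delta> \<bullet> G (\<theta> + \<xi> *\<^sub>R \<delta>)"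
    using gderiv_mean_value[OF assms(1)] by blast
  define g where "g = norm (G (\<theta> + \<xi> *\<^sub>R \<delta>))"
  have "norm (\<xi> *\<^sub>R \<delta>) \<le> norm \<delta>"
    using \<xi> by (simp add: mult_left_le_one_le)
  then have g_le_sup: "ennreal g \<le> (SUP e\<in>cball 0 R. ennreal (norm (G (\<theta> + e))))"
    unfolding g_def using assms(2) by (intro SUP_upper) auto
  have "- (\<delta> \<bullet> G (\<theta> + \<xi> *\<^sub>R \<delta>)) \<le> norm \<delta> * g"
    unfolding g_def by (metis Cauchy_Schwarz_ineq2 abs_le_iff inner_minus_left norm_minus_cancel)
  also have "\<dots> \<le> R * g"
    using assms(2) by (simp add: g_def mult_right_mono)
  finally have "F \<theta> \<le> max (F (\<theta> + \<delta>)) 0 + R * g"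
    using mvt by linarith
  then have "ennreal (F \<theta>) \<le> ennreal (max (F (\<theta> + \<delta>)) 0 + R * g)"
    by (rule ennreal_leI)
  also have "\<dots> = ennreal (F (\<theta> + \<delta>)) + ennreal R * ennreal g"
    using order_trans[OF norm_ge_zero assms(2)]
    by (simp add: g_def ennreal_plus ennreal_mult max_def ennreal_neg)
  also have "\<dots> \<le> ennreal (F (\<theta> + \<delta>)) + ennreal R * (SUP e\<in>cball 0 R. ennreal (norm (G (\<theta> + e))))"
    using g_le_sup by (intro add_left_mono mult_left_mono) auto
  finally show ?thesis .
qed

lemma normconst_pos:
  assumes "prob_space Q" and "integrable Q (\<lambda>x. exp (\<theta> \<bullet> f x))"
  shows "normconst Q f \<theta> > 0"
proof -
  have "AE x in Q. exp (\<theta> \<bullet> f x) = 0 \<Longrightarrow> False"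
    using prob_space.AE_False[OF assms(1)] by simp
  then have "(\<integral>x. exp (\<theta> \<bullet> f x) \<partial>Q) \<noteq> 0"
    using integral_nonneg_eq_0_iff_AE[OF assms(2)] by auto
  moreover have "0 \<le> (\<integral>x. exp (\<theta> \<bullet> f x) \<partial>Q)" by simp
  ultimately show ?thesis unfolding normconst_def by linarith
qed

lemma nn_integral_ratio_eq_1:
  assumes "prob_space Q" and "integrable Q (\<lambda>x. exp (\<theta> \<bullet> f x))"
  shows "(\<integral>\<^sup>+x. ennreal (ratio Q f x \<theta>) \<partial>Q) = 1"
proof -
  have N: "normconst Q f \<theta> > 0" using normconst_pos[OF assms] .
  have "integrable Q (\<lambda>x. ratio Q f x \<theta>)"
    unfolding ratio_def using assms(2) by (rule integrable_divide)
  then have "(\<integral>\<^sup>+x. ennreal (ratio Q f x \<theta>) \<partial>Q) = ennreal (\<integral>x. ratio Q f x \<theta> \<partial>Q)"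
    using N by (intro nn_integral_eq_integral) (auto simp: ratio_def)
  also have "(\<integral>x. ratio Q f x \<theta> \<partial>Q) = 1"
    using N by (simp add: ratio_def normconst_def)
  finally show ?thesis by simp
qed

theorem proposition8:
  fixes Q :: "'a::euclidean_space measure" and q :: "'a \<Rightarrow> real"
    and f :: "'a \<Rightarrow> 'b::euclidean_space" and \<theta>s :: 'b and c :: real
  assumes "prob_space Q"
    and "q \<in> borel_measurable borel" and "\<And>x. q x \<ge> 0"
    and "Q = density lborel (\<lambda>x. ennreal (q x))"
    and "f \<in> borel_measurable borel"
    and "\<And>\<theta>. integrable Q (\<lambda>x. exp (\<theta> \<bullet> f x))"
    and "\<And>x \<theta>. (\<lambda>t. ratio Q f x t) differentiable (at \<theta>)"
    and "(\<lambda>x. SUP \<delta>\<in>cball 0 (norm \<theta>s). ennreal (norm (ratio_grad Q f x (\<theta>s + \<delta>))))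
           \<in> borel_measurable Q"
    and "ennreal (norm \<theta>s) *
           (\<integral>\<^sup>+x. (SUP \<delta>\<in>cball 0 (norm \<theta>s). ennreal (norm (ratio_grad Q f x (\<theta>s + \<delta>)))) \<partial>Q)
         \<le> ennreal c"
    and "0 < c" and "c < 1"
  shows "(\<integral>\<^sup>+x. (INF \<delta>\<in>cball 0 (norm \<theta>s). ennreal (ratio Q f x (\<theta>s + \<delta>))) \<partial>Q)
         \<ge> ennreal (1 - c)"
proof -
  define R where "R = ennreal (norm \<theta>s)"
  define G where "G x = (SUP \<delta>\<in>cball 0 (norm \<theta>s). ennreal (norm (ratio_grad Q f x (\<theta>s + \<delta>))))" for x
  \<comment> \<open>a measurable minorant of the infimum, which itself need not be measurable\<close>
  define h where "h x = ennreal (ratio Q f x \<theta>s) - R * G x" for x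
  have "f \<in> borel_measurable Q" using assms(4,5) by simp
  then have h_meas: "h \<in> borel_measurable Q"
    using assms(8) unfolding h_def G_def ratio_def by measurable
  have h_le_inf: "h x \<le> (INF \<delta>\<in>cball 0 (norm \<theta>s). ennreal (ratio Q f x (\<theta>s + \<delta>)))" for x
  proof (rule INF_greatest)
    fix \<delta> :: 'b assume "\<delta> \<in> cball 0 (norm \<theta>s)"
    then have "ennreal (ratio Q f x \<theta>s) \<le> ennreal (ratio Q f x (\<theta>s + \<delta>)) + R * G x"
      unfolding R_def G_def ratio_grad_def
      by (intro ennreal_le_by_sup_gradient gderiv_The assms(7)) simp
    then show "h x \<le> ennreal (ratio Q f x (\<theta>s + \<delta>))"
      unfolding h_def by (simp add: ennreal_minus_le_iff add.commute)
  qed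
  have "1 = (\<integral>\<^sup>+x. ennreal (ratio Q f x \<theta>s) \<partial>Q)"
    using nn_integral_ratio_eq_1[OF assms(1,6)] by simp
  also have "\<dots> \<le> (\<integral>\<^sup>+x. h x + R * G x \<partial>Q)"
    unfolding h_def by (intro nn_integral_mono) (auto simp: diff_add_self_ennreal)
  also have "\<dots> = (\<integral>\<^sup>+x. h x \<partial>Q) + R * (\<integral>\<^sup>+x. G x \<partial>Q)"
    using h_meas assms(8) by (simp add: G_def nn_integral_add nn_integral_cmult)
  also have "\<dots> \<le> (\<integral>\<^sup>+x. h x \<partial>Q) + ennreal c"
    using assms(9) by (intro add_left_mono) (simp add: R_def G_def)
  finally have "ennreal (1 - c) \<le> (\<integral>\<^sup>+x. h x \<partial>Q)"
    using assms(10) by (simp add: ennreal_minus_le_iff add.commute flip: ennreal_minus ennreal_1)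
  also have "\<dots> \<le> (\<integral>\<^sup>+x. (INF \<delta>\<in>cball 0 (norm \<theta>s). ennreal (ratio Q f x (\<theta>s + \<delta>))) \<partial>Q)"
    by (intro nn_integral_mono h_le_inf)
  finally show ?thesis .
qed

end
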